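(* Consider an instance of the constructive \$-protection problem (all voter weights equal to 1). Suppose the defender succeeds by awarding a set $\mathcal{V}_F\subseteq\mathcal{V}$ with $\sum_{v_j\in\mathcal{V}_F}p_j^a\le F$. If $v_{j'}\prec v_j$, $v_{j'}\in\mathcal{V}_F$ and $v_j\notin\mathcal{V}_F$, then the defender also succeeds by awarding $(\mathcal{V}_F\setminus\{v_{j'}\})\cup\{v_j\}$.
   Context: Election model. Candidates $\mathcal{C}=\{c_1,\dots,c_m\}$, voters $\mathcal{V}=\{v_1,\dots,v_n\}$; voter $v_j$ has a preference list $\tau_j$ (a linear order of $\mathcal{C}$), weight $w_j$, awarding price $p_j^a\in\mathbb{Z}_{>0}$, bribing price $p_j^b\in\mathbb{Z}_{>0}$. A scoring rule $\alpha=(\alpha_1\ge\cdots\ge\alpha_m)$ of nonnegative integers gives the candidate at position $z$ of $v_j$'s list $w_j\alpha_z$ points; total score is the sum over voters. In the constructive \$-protection problem all $w_j=1$, there is a designated candidate $c^\star$, a defense budget $F$ and an attack budget $B$. Given awarded voters $\mathcal{V}_F$, the attacker may choose $\mathcal{V}_B\subseteq\mathcal{V}\setminus\mathcal{V}_F$ with $\sum_{v_j\in\mathcal{V}_B}p_j^b\le B$ and replace each list in $\mathcal{V}_B$ by an arbitrary list; the defender succeeds with $\mathcal{V}_F$ (total awarding price at most $F$) if no such bribery makes $c^\star$ obtain a total score strictly higher than every other candidate. Dominance: $v_{j'}\prec v_j$ if either (i) $\tau_j=\tau_{j'}$, $w_j\ge w_{j'}$, $p_j^a\le p_{j'}^a$,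 $p_j^b\le p_{j'}^b$ with at least one of these three inequalities strict; or (ii) $\tau_j=\tau_{j'}$, $w_j=w_{j'}$, $p_j^a=p_{j'}^a$, $p_j^b=p_{j'}^b$ and $j'<j$. *)

theory Defs
  imports Main
begin

text \<open>Candidates form a finite set Cs of some type 'c; a preference list is a linear
  order of Cs, represented as a list without repetitions whose elements are exactly Cs
  (first element = most preferred). Voters are indexed by 0..n-1. Positions are 0-indexed,
  so the paper's alpha_z corresponds to alpha (z-1).\<close>

definition is_pref :: "'c set \<Rightarrow> 'c list \<Rightarrow> bool" where
  "is_pref Cs \<tau> \<longleftrightarrow> distinct \<tau> \<and> set \<tau> = Cs"

definition pos :: "'c list \<Rightarrow> 'c \<Rightarrow> nat" where
  "pos \<tau> c = (LEAST i. i < length \<tau> \<and> \<tau> ! i = c)"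

definition scoring_rule :: "'c set \<Rightarrow> (nat \<Rightarrow> nat) \<Rightarrow> bool" where
  "scoring_rule Cs \<alpha> \<longleftrightarrow> (\<forall>i j. i \<le> j \<longrightarrow> j < card Cs \<longrightarrow> \<alpha> j \<le> \<alpha> i)"

definition score :: "(nat \<Rightarrow> nat) \<Rightarrow> nat \<Rightarrow> (nat \<Rightarrow> nat) \<Rightarrow> (nat \<Rightarrow> 'c list) \<Rightarrow> 'c \<Rightarrow> nat" where
  "score \<alpha> n w P c = (\<Sum>j<n. w j * \<alpha> (pos (P j) c))"

definition wins :: "'c set \<Rightarrow> (nat \<Rightarrow> nat) \<Rightarrow> nat \<Rightarrow> (nat \<Rightarrow> nat) \<Rightarrow> (nat \<Rightarrow> 'c list) \<Rightarrow> 'c \<Rightarrow> bool" where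
  "wins Cs \<alpha> n w P c \<longleftrightarrow> (\<forall>d\<in>Cs. d \<noteq> c \<longrightarrow> score \<alpha> n w P d < score \<alpha> n w P c)"

definition defender_succeeds ::
  "'c set \<Rightarrow> (nat \<Rightarrow> nat) \<Rightarrow> nat \<Rightarrow> (nat \<Rightarrow> nat) \<Rightarrow> (nat \<Rightarrow> 'c list) \<Rightarrow>
   (nat \<Rightarrow> nat) \<Rightarrow> (nat \<Rightarrow> nat) \<Rightarrow> 'c \<Rightarrow> nat \<Rightarrow> nat \<Rightarrow> nat set \<Rightarrow> bool" where
  "defender_succeeds Cs \<alpha> n w \<tau> pa pb cstar F B VF \<longleftrightarrow>
     VF \<subseteq> {..<n} \<and> (\<Sum>j\<in>VF. pa j) \<le> F \<and>
     (\<forall>VB P'. VB \<subseteq> {..<n} - VF \<longrightarrow> (\<Sum>j\<in>VB. pb j) \<le> B \<longrightarrow>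
        (\<forall>j\<in>VB. is_pref Cs (P' j)) \<longrightarrow> (\<forall>j. j \<notin> VB \<longrightarrow> P' j = \<tau> j) \<longrightarrow>
        \<not> wins Cs \<alpha> n w P' cstar)"

text \<open>Dominance: dominated w \<tau> pa pb j' j means v_j' \<prec> v_j.\<close>
definition dominated :: "(nat \<Rightarrow> nat) \<Rightarrow> (nat \<Rightarrow> 'c list) \<Rightarrow> (nat \<Rightarrow> nat) \<Rightarrow> (nat \<Rightarrow> nat) \<Rightarrow> nat \<Rightarrow> nat \<Rightarrow> bool" where
  "dominated w \<tau> pa pb j' j \<longleftrightarrow>
     (\<tau> j = \<tau> j' \<and> w j \<ge> w j' \<and> pa j \<le> pa j' \<and> pb j \<le> pb j' \<and>
        (w j > w j' \<or> pa j < pa j' \<or> pb j < pb j'))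
   \<or> (\<tau> j = \<tau> j' \<and> w j = w j' \<and> pa j = pa j' \<and> pb j = pb j' \<and> j' < j)"

end

theory Submission
  imports Defs "HOL-Combinatorics.Permutations"
begin

text \<open>If an attack on the new awarded set bribes \<open>j'\<close>, the attacker can instead bribe \<open>j\<close>,
  which has become unprotected, giving it the list meant for \<open>j'\<close> and leaving \<open>j'\<close> with its
  original list \<open>\<tau> j' = \<tau> j\<close>. This attack is admissible against the old awarded set and costs
  no more since \<open>pb j \<le> pb j'\<close>; the profile it produces is the original attack's profile with
  the voters \<open>j\<close> and \<open>j'\<close> interchanged, which changes no score because the two voters have
  equal weight. So the old defence also blocks every attack on the new one.\<close>

definition bribed :: "'c set \<Rightarrow> (nat \<Rightarrow> 'c list) \<Rightarrow> nat set \<Rightarrow> (nat \<Rightarrow> 'c list) \<Rightarrow> bool" where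
  "bribed Cs \<tau> VB P \<longleftrightarrow> (\<forall>i\<in>VB. is_pref Cs (P i)) \<and> (\<forall>i. i \<notin> VB \<longrightarrow> P i = \<tau> i)"

lemma defender_succeeds_iff:
  "defender_succeeds Cs \<alpha> n w \<tau> pa pb cstar F B VF \<longleftrightarrow>
     VF \<subseteq> {..<n} \<and> sum pa VF \<le> F \<and>
     (\<forall>VB P. VB \<subseteq> {..<n} - VF \<longrightarrow> sum pb VB \<le> B \<longrightarrow> bribed Cs \<tau> VB P \<longrightarrow>
        \<not> wins Cs \<alpha> n w P cstar)"
  unfolding defender_succeeds_def bribed_def by blast

lemma score_permute_voters:
  assumes "p permutes {..<n}" and "\<forall>i<n. w (p i) = w i"
  shows "score \<alpha> n w (P \<circ> p) c = score \<alpha> n w P c"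
proof -
  have "score \<alpha> n w P c = (\<Sum>i<n. w (p i) * \<alpha> (pos (P (p i)) c))"
    unfolding score_def using sum.permute[OF assms(1)] by (simp add: comp_def)
  also have "\<dots> = score \<alpha> n w (P \<circ> p) c"
    unfolding score_def using assms(2) by simp
  finally show ?thesis by simp
qed

lemma wins_permute_voters:
  assumes "p permutes {..<n}" and "\<forall>i<n. w (p i) = w i"
  shows "wins Cs \<alpha> n w (P \<circ> p) c \<longleftrightarrow> wins Cs \<alpha> n w P c"
  unfolding wins_def score_permute_voters[OF assms] ..

lemma sum_exchange_le:
  fixes f :: "'a \<Rightarrow> 'b::ordered_comm_monoid_add"
  assumes "finite A" and "a \<in> A" and "b \<notin> A" and "f b \<le> f a"
  shows "sum f (A - {a} \<union> {b}) \<le> sum f A"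
proof -
  have "sum f (A - {a} \<union> {b}) = sum f (A - {a}) + f b"
    using assms(1,3) by (simp add: add.commute)
  also have "\<dots> \<le> sum f (A - {a}) + f a"
    using assms(4) by (rule add_left_mono)
  also have "\<dots> = sum f A"
    using assms(1,2) by (simp add: sum.remove add.commute)
  finally show ?thesis .
qed

lemma bribed_transpose:
  assumes "bribed Cs \<tau> VB P" and "j' \<in> VB" and "j \<notin> VB" and "\<tau> j = \<tau> j'"
  shows "bribed Cs \<tau> (VB - {j'} \<union> {j}) (P \<circ> transpose j j')"
  using assms unfolding bribed_def by (auto simp: transpose_def)

lemma defender_succeeds_exchange:
  assumes succeeds: "defender_succeeds Cs \<alpha> n w \<tau> pa pb cstar F B VF"
    and "j < n" and "j' < n" and "j' \<in> VF" and "j \<notin> VF"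
    and "\<tau> j = \<tau> j'" and "w j = w j'" and "pa j \<le> pa j'" and "pb j \<le> pb j'"
  shows "defender_succeeds Cs \<alpha> n w \<tau> pa pb cstar F B (VF - {j'} \<union> {j})"
proof -
  from succeeds have VF: "VF \<subseteq> {..<n}" "sum pa VF \<le> F"
    and safe: "\<And>VB P. VB \<subseteq> {..<n} - VF \<Longrightarrow> sum pb VB \<le> B \<Longrightarrow> bribed Cs \<tau> VB P \<Longrightarrow>
                 \<not> wins Cs \<alpha> n w P cstar"
    unfolding defender_succeeds_iff by blast+
  have "sum pa (VF - {j'} \<union> {j}) \<le> F"
    using sum_exchange_le[of VF j' j pa] VF finite_subset assms(4,5,8) by fastforce
  moreover have "\<not> wins Cs \<alpha> n w P cstar"
    if VB: "VB \<subseteq> {..<n} - (VF - {j'} \<union> {j})" and cost: "sum pb VB \<le> B"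
      and P: "bribed Cs \<tau> VB P" for VB P
  proof (cases "j' \<in> VB")
    case False
    then show ?thesis using VB cost P by (intro safe) auto
  next
    case True
    let ?t = "transpose j j'"
    have "\<not> wins Cs \<alpha> n w (P \<circ> ?t) cstar"
    proof (rule safe)
      show "VB - {j'} \<union> {j} \<subseteq> {..<n} - VF"
        using VB \<open>j < n\<close> \<open>j \<notin> VF\<close> by blast
      show "sum pb (VB - {j'} \<union> {j}) \<le> B"
        using sum_exchange_le[of VB j' j pb] VB finite_subset True cost \<open>pb j \<le> pb j'\<close>
        by fastforce
      show "bribed Cs \<tau> (VB - {j'} \<union> {j}) (P \<circ> ?t)"
        using P True VB \<open>\<tau> j = \<tau> j'\<close> by (intro bribed_transpose) auto
    qed
    moreover have "?t permutes {..<n}"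
      using \<open>j < n\<close> \<open>j' < n\<close> by (simp add: permutes_swap_id)
    moreover have "\<forall>i<n. w (?t i) = w i"
      using \<open>w j = w j'\<close> by (simp add: transpose_def)
    ultimately show ?thesis by (simp add: wins_permute_voters)
  qed
  ultimately show ?thesis
    using VF \<open>j < n\<close> unfolding defender_succeeds_iff by blast
qed

theorem lemma8:
  fixes Cs :: "'c set" and \<alpha> :: "nat \<Rightarrow> nat" and n :: nat and w :: "nat \<Rightarrow> nat"
    and \<tau> :: "nat \<Rightarrow> 'c list" and pa pb :: "nat \<Rightarrow> nat" and cstar :: 'c
    and F B :: nat and VF :: "nat set" and j j' :: nat
  assumes "finite Cs" and "cstar \<in> Cs"
    and "scoring_rule Cs \<alpha>"
    and "\<forall>i<n. is_pref Cs (\<tau> i)"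
    and "\<forall>i<n. w i = 1"
    and "\<forall>i<n. pa i > 0 \<and> pb i > 0"
    and "j < n" and "j' < n"
    and "defender_succeeds Cs \<alpha> n w \<tau> pa pb cstar F B VF"
    and "dominated w \<tau> pa pb j' j"
    and "j' \<in> VF" and "j \<notin> VF"
  shows "defender_succeeds Cs \<alpha> n w \<tau> pa pb cstar F B ((VF - {j'}) \<union> {j})"
proof -
  have "\<tau> j = \<tau> j'" "pa j \<le> pa j'" "pb j \<le> pb j'"
    using \<open>dominated w \<tau> pa pb j' j\<close> unfolding dominated_def by auto
  moreover have "w j = w j'"
    using \<open>\<forall>i<n. w i = 1\<close> \<open>j < n\<close> \<open>j' < n\<close> by simp
  ultimately show ?thesis
    using defender_succeeds_exchange[OF assms(9,7,8,11,12)] by blast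
qed

end
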